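(* Let $(\mathcal{M},\varphi,\xi,\eta,g)$ be a $(2n+1)$-dimensional almost paracontact almost paracomplex Riemannian manifold whose Reeb vector field $\xi$ is torse-forming with function $f$. Suppose $\mathcal{M}$ is para-Einstein-like with constants $(a,b,c)$ and admits a para-Ricci-like soliton with potential $\xi$ and constants $(\lambda,\mu,\nu)$. Then $f$ is constant and $$f=\varepsilon\sqrt{-\frac{a+b+c}{2n}}=\varepsilon\sqrt{\frac{\lambda+\mu+\nu}{2n}},\qquad \varepsilon\in\{1,-1\}.$$
   Context: An almost paracontact almost paracomplex Riemannian (apapR) manifold $(\mathcal{M},\varphi,\xi,\eta,g)$ is a smooth $(2n+1)$-dimensional manifold with a $(1,1)$-tensor field $\varphi$, a vector field $\xi$, a 1-form $\eta$ and a Riemannian metric $g$ such that $\varphi\xi=0$, $\varphi^2=I-\eta\otimes\xi$, $\eta\circ\varphi=0$, $\eta(\xi)=1$, $\operatorname{tr}\varphi=0$, $g(\varphi x,\varphi y)=g(x,y)-\eta(x)\eta(y)$. $\nabla$ is the Levi-Civita connection of $g$ and $\rho$ its Ricci tensor. The associated metric is $\tilde g(x,y)=g(x,\varphi y)+\eta(x)\eta(y)$. $\xi$ is torse-forming with function $f$ if $\nabla_x\xi=f\,x+\alpha(x)\xi$ for a smooth function $f$ and a 1-form $\alpha$; on an apapR manifold this means $\nabla_x\xi=f\,\varphi^2x$. The manifold is para-Einstein-like with constants $(a,b,c)$ if $\rho=a\,g+b\,\tilde g+c\,\eta\otimes\eta$. It admits a para-Ricci-like soliton with potential $\xi$ and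 constants $(\lambda,\mu,\nu)$ if $\rho=-\frac12\mathcal{L}_\xi g-\lambda g-\mu\tilde g-\nu\,\eta\otimes\eta$. *)

theory Defs
  imports "HOL-Analysis.Analysis"
begin

text \<open>Local-coordinate model: the manifold is an open set U of real^'m
(coordinates x^i, i :: 'm); tensor fields are given by their components.
Vectors are real^'m, covectors (1-forms) are also represented by their
component vectors in real^'m, evaluated via the inner product.\<close>

definition partial :: "'m::finite \<Rightarrow> (real^'m \<Rightarrow> real) \<Rightarrow> real^'m \<Rightarrow> real" where
  "partial i h p = deriv (\<lambda>t. h (p + t *\<^sub>R axis i 1)) 0"

fun iter_partial :: "'m::finite list \<Rightarrow> (real^'m \<Rightarrow> real) \<Rightarrow> real^'m \<Rightarrow> real" where
  "iter_partial [] h = h"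
| "iter_partial (i # is) h = partial i (iter_partial is h)"

definition smooth_fun_on :: "(real^'m::finite) set \<Rightarrow> (real^'m \<Rightarrow> real) \<Rightarrow> bool" where
  "smooth_fun_on U h \<longleftrightarrow> (\<forall>is. iter_partial is h differentiable_on U)"

definition smooth_vec_on :: "(real^'m::finite) set \<Rightarrow> (real^'m \<Rightarrow> real^'m) \<Rightarrow> bool" where
  "smooth_vec_on U X \<longleftrightarrow> (\<forall>i. smooth_fun_on U (\<lambda>q. X q $ i))"

definition smooth_mat_on :: "(real^'m::finite) set \<Rightarrow> (real^'m \<Rightarrow> real^'m^'m) \<Rightarrow> bool" where
  "smooth_mat_on U A \<longleftrightarrow> (\<forall>i j. smooth_fun_on U (\<lambda>q. A q $ i $ j))"

definition gform :: "(real^'m::finite \<Rightarrow> real^'m^'m) \<Rightarrow> real^'m \<Rightarrow> real^'m \<Rightarrow> real^'m \<Rightarrow> real" where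
  "gform g p x y = x \<bullet> (g p *v y)"

definition christoffel :: "(real^'m::finite \<Rightarrow> real^'m^'m) \<Rightarrow> real^'m \<Rightarrow> 'm \<Rightarrow> 'm \<Rightarrow> 'm \<Rightarrow> real" where
  "christoffel g p k i j = (1/2) * (\<Sum>l\<in>UNIV. matrix_inv (g p) $ k $ l *
      (partial i (\<lambda>q. g q $ j $ l) p + partial j (\<lambda>q. g q $ i $ l) p - partial l (\<lambda>q. g q $ i $ j) p))"

definition levi_civita :: "(real^'m::finite \<Rightarrow> real^'m^'m) \<Rightarrow> real^'m \<Rightarrow> (real^'m \<Rightarrow> real^'m) \<Rightarrow> real^'m \<Rightarrow> real^'m" where
  "levi_civita g x Y p = (\<chi> k. (\<Sum>i\<in>UNIV. x $ i * partial i (\<lambda>q. Y q $ k) p)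
      + (\<Sum>i\<in>UNIV. \<Sum>j\<in>UNIV. christoffel g p k i j * x $ i * Y p $ j))"

text \<open>Ricci tensor components, for R(x,y)z = nabla_x nabla_y z - nabla_y nabla_x z - nabla_[x,y] z
  and rho(y,z) = tr (x \<mapsto> R(x,y)z).\<close>
definition ricci_comp :: "(real^'m::finite \<Rightarrow> real^'m^'m) \<Rightarrow> real^'m \<Rightarrow> 'm \<Rightarrow> 'm \<Rightarrow> real" where
  "ricci_comp g p i j =
     (\<Sum>k\<in>UNIV. partial k (\<lambda>q. christoffel g q k i j) p)
   - (\<Sum>k\<in>UNIV. partial j (\<lambda>q. christoffel g q k i k) p)
   + (\<Sum>k\<in>UNIV. \<Sum>l\<in>UNIV. christoffel g p k k l * christoffel g p l i j
                          - christoffel g p k j l * christoffel g p l i k)"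

definition ricci :: "(real^'m::finite \<Rightarrow> real^'m^'m) \<Rightarrow> real^'m \<Rightarrow> real^'m \<Rightarrow> real^'m \<Rightarrow> real" where
  "ricci g p x y = (\<Sum>i\<in>UNIV. \<Sum>j\<in>UNIV. x $ i * y $ j * ricci_comp g p i j)"

definition lie_g_comp :: "(real^'m::finite \<Rightarrow> real^'m) \<Rightarrow> (real^'m \<Rightarrow> real^'m^'m) \<Rightarrow> real^'m \<Rightarrow> 'm \<Rightarrow> 'm \<Rightarrow> real" where
  "lie_g_comp X g p i j =
     (\<Sum>k\<in>UNIV. X p $ k * partial k (\<lambda>q. g q $ i $ j) p)
   + (\<Sum>k\<in>UNIV. g p $ k $ j * partial i (\<lambda>q. X q $ k) p)
   + (\<Sum>k\<in>UNIV. g p $ i $ k * partial j (\<lambda>q. X q $ k) p)"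

definition lie_g :: "(real^'m::finite \<Rightarrow> real^'m) \<Rightarrow> (real^'m \<Rightarrow> real^'m^'m) \<Rightarrow> real^'m \<Rightarrow> real^'m \<Rightarrow> real^'m \<Rightarrow> real" where
  "lie_g X g p x y = (\<Sum>i\<in>UNIV. \<Sum>j\<in>UNIV. x $ i * y $ j * lie_g_comp X g p i j)"

definition assoc_metric :: "(real^'m::finite \<Rightarrow> real^'m^'m) \<Rightarrow> (real^'m \<Rightarrow> real^'m) \<Rightarrow> (real^'m \<Rightarrow> real^'m^'m)
     \<Rightarrow> real^'m \<Rightarrow> real^'m \<Rightarrow> real^'m \<Rightarrow> real" where
  "assoc_metric \<phi> \<eta> g p x y = gform g p x (\<phi> p *v y) + (\<eta> p \<bullet> x) * (\<eta> p \<bullet> y)"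

definition apapR :: "(real^'m::finite) set \<Rightarrow> (real^'m \<Rightarrow> real^'m^'m) \<Rightarrow> (real^'m \<Rightarrow> real^'m)
     \<Rightarrow> (real^'m \<Rightarrow> real^'m) \<Rightarrow> (real^'m \<Rightarrow> real^'m^'m) \<Rightarrow> bool" where
  "apapR U \<phi> \<xi> \<eta> g \<longleftrightarrow> open U \<and>
     smooth_mat_on U \<phi> \<and> smooth_vec_on U \<xi> \<and> smooth_vec_on U \<eta> \<and> smooth_mat_on U g \<and>
     (\<forall>p\<in>U.
        (\<forall>i j. g p $ i $ j = g p $ j $ i) \<and>
        (\<forall>v. v \<noteq> 0 \<longrightarrow> gform g p v v > 0) \<and>
        \<phi> p *v \<xi> p = 0 \<and>
        (\<forall>x. \<phi> p *v (\<phi> p *v x) = x - (\<eta> p \<bullet> x) *\<^sub>R \<xi> p) \<and>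
        (\<forall>x. \<eta> p \<bullet> (\<phi> p *v x) = 0) \<and>
        \<eta> p \<bullet> \<xi> p = 1 \<and>
        trace (\<phi> p) = 0 \<and>
        (\<forall>x y. gform g p (\<phi> p *v x) (\<phi> p *v y) = gform g p x y - (\<eta> p \<bullet> x) * (\<eta> p \<bullet> y)))"

definition torse_forming :: "(real^'m::finite) set \<Rightarrow> (real^'m \<Rightarrow> real^'m^'m) \<Rightarrow> (real^'m \<Rightarrow> real^'m)
     \<Rightarrow> (real^'m \<Rightarrow> real) \<Rightarrow> bool" where
  "torse_forming U g \<xi> f \<longleftrightarrow> smooth_fun_on U f \<and>
     (\<exists>\<alpha>. smooth_vec_on U \<alpha> \<and>
        (\<forall>p\<in>U. \<forall>x. levi_civita g x \<xi> p = f p *\<^sub>R x + (\<alpha> p \<bullet> x) *\<^sub>R \<xi> p))"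

definition para_Einstein_like :: "(real^'m::finite) set \<Rightarrow> (real^'m \<Rightarrow> real^'m^'m) \<Rightarrow> (real^'m \<Rightarrow> real^'m)
     \<Rightarrow> (real^'m \<Rightarrow> real^'m^'m) \<Rightarrow> real \<Rightarrow> real \<Rightarrow> real \<Rightarrow> bool" where
  "para_Einstein_like U \<phi> \<eta> g a b c \<longleftrightarrow>
     (\<forall>p\<in>U. \<forall>x y. ricci g p x y =
        a * gform g p x y + b * assoc_metric \<phi> \<eta> g p x y + c * (\<eta> p \<bullet> x) * (\<eta> p \<bullet> y))"

definition para_Ricci_like_soliton :: "(real^'m::finite) set \<Rightarrow> (real^'m \<Rightarrow> real^'m^'m) \<Rightarrow> (real^'m \<Rightarrow> real^'m)
     \<Rightarrow> (real^'m \<Rightarrow> real^'m) \<Rightarrow> (real^'m \<Rightarrow> real^'m^'m) \<Rightarrow> real \<Rightarrow> real \<Rightarrow> real \<Rightarrow> bool" where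
  "para_Ricci_like_soliton U \<phi> \<xi> \<eta> g lam mu nu \<longleftrightarrow>
     (\<forall>p\<in>U. \<forall>x y. ricci g p x y =
        - (1/2) * lie_g \<xi> g p x y - lam * gform g p x y - mu * assoc_metric \<phi> \<eta> g p x y
        - nu * (\<eta> p \<bullet> x) * (\<eta> p \<bullet> y))"

end

theory Submission
  imports Defs
begin

text \<open>Differentiating \<open>g(\<xi>, \<xi>) = 1\<close> with the metric Levi-Civita connection shows that the 1-form
  of the torse-forming condition is \<open>-f \<eta>\<close>, so \<open>\<nabla>\<xi> = f \<phi>\<^sup>2\<close> and \<open>L\<^sub>\<xi> g = 2 f (g - \<eta> \<otimes> \<eta>)\<close>.
  Subtracting the soliton equation from the Einstein-like one then gives
  \<open>(a + \<lambda> + f) g + (b + \<mu>) g' + (c + \<nu> - f) \<eta> \<otimes> \<eta> = 0\<close>, with \<open>g'\<close> the associated metric.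
  Its trace (where \<open>tr \<phi> = 0\<close>) and its value on \<open>(\<xi>, \<xi>)\<close> force \<open>f = -(a + \<lambda>)\<close>, so \<open>f\<close> is
  constant. For constant \<open>f\<close> the Ricci identity applied to \<open>\<nabla>\<xi> = f \<phi>\<^sup>2\<close> gives
  \<open>\<rho>(\<xi>, \<xi>) = -2n f\<^sup>2\<close>, while the two structure equations give
  \<open>\<rho>(\<xi>, \<xi>) = a + b + c = -(\<lambda> + \<mu> + \<nu>)\<close>.\<close>

section \<open>Partial derivatives in coordinates\<close>

lemma has_real_derivative_along_line:
  fixes h :: "real^'m::finite \<Rightarrow> real"
  assumes "(h has_derivative D) (at (q + s *\<^sub>R v))"
  shows "((\<lambda>t. h (q + t *\<^sub>R v)) has_real_derivative D v) (at s)"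
proof -
  have "((\<lambda>t. q + t *\<^sub>R v) has_derivative (\<lambda>u. u *\<^sub>R v)) (at s)"
    by (auto intro!: derivative_eq_intros)
  then have "((h \<circ> (\<lambda>t. q + t *\<^sub>R v)) has_derivative (D \<circ> (\<lambda>u. u *\<^sub>R v))) (at s)"
    by (rule diff_chain_at) (use assms in simp)
  moreover have "D \<circ> (\<lambda>u. u *\<^sub>R v) = (\<lambda>u. D v * u)"
    using has_derivative_linear[OF assms] by (auto simp: linear_scale o_def)
  ultimately show ?thesis
    by (simp add: has_field_derivative_def o_def)
qed

lemma partial_eq_derivative:
  fixes h :: "real^'m::finite \<Rightarrow> real"
  assumes "(h has_derivative D) (at p)"
  shows "partial i h p = D (axis i 1)"
  unfolding partial_def
  by (rule DERIV_imp_deriv, rule has_real_derivative_along_line) (use assms in simp)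

lemma has_real_derivative_partial:
  fixes h :: "real^'m::finite \<Rightarrow> real"
  assumes "h differentiable (at (q + s *\<^sub>R axis i 1))"
  shows "((\<lambda>t. h (q + t *\<^sub>R axis i 1)) has_real_derivative partial i h (q + s *\<^sub>R axis i 1)) (at s)"
proof -
  obtain D where D: "(h has_derivative D) (at (q + s *\<^sub>R axis i 1))"
    using assms differentiable_def by blast
  show ?thesis
    using has_real_derivative_along_line[OF D] partial_eq_derivative[OF D] by simp
qed

lemma has_real_derivative_partial_at_0:
  fixes h :: "real^'m::finite \<Rightarrow> real"
  assumes "h differentiable (at p)"
  shows "((\<lambda>t. h (p + t *\<^sub>R axis i 1)) has_real_derivative partial i h p) (at 0)"
  using has_real_derivative_partial[of h p 0 i] assms by simp

lemma partial_const [simp]: "partial i (\<lambda>q. c) p = 0"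
  unfolding partial_def by simp

lemma partial_cong_open:
  fixes h1 h2 :: "real^'m::finite \<Rightarrow> real"
  assumes "open U" "p \<in> U" "\<And>q. q \<in> U \<Longrightarrow> h1 q = h2 q"
  shows "partial i h1 p = partial i h2 p"
  unfolding partial_def
proof (rule deriv_cong_ev)
  obtain e where e: "e > 0" "ball p e \<subseteq> U"
    using assms(1,2) open_contains_ball by blast
  have "eventually (\<lambda>t. p + t *\<^sub>R axis i 1 \<in> U) (nhds 0)"
    unfolding eventually_nhds_metric
    by (rule exI[of _ e]) (use e in \<open>auto simp: dist_norm subset_iff\<close>)
  then show "\<forall>\<^sub>F t in nhds 0. h1 (p + t *\<^sub>R axis i 1) = h2 (p + t *\<^sub>R axis i 1)"
    by eventually_elim (use assms(3) in auto)
qed simp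

lemma partial_add:
  fixes h1 h2 :: "real^'m::finite \<Rightarrow> real"
  assumes "h1 differentiable (at p)" "h2 differentiable (at p)"
  shows "partial i (\<lambda>q. h1 q + h2 q) p = partial i h1 p + partial i h2 p"
  unfolding partial_def[of i "\<lambda>q. h1 q + h2 q"]
  by (rule DERIV_imp_deriv)
     (use DERIV_add[OF has_real_derivative_partial_at_0[OF assms(1)]
                       has_real_derivative_partial_at_0[OF assms(2)]] in auto)

lemma partial_diff:
  fixes h1 h2 :: "real^'m::finite \<Rightarrow> real"
  assumes "h1 differentiable (at p)" "h2 differentiable (at p)"
  shows "partial i (\<lambda>q. h1 q - h2 q) p = partial i h1 p - partial i h2 p"
  unfolding partial_def[of i "\<lambda>q. h1 q - h2 q"]
  by (rule DERIV_imp_deriv)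
     (use DERIV_diff[OF has_real_derivative_partial_at_0[OF assms(1)]
                        has_real_derivative_partial_at_0[OF assms(2)]] in auto)

lemma partial_mult:
  fixes h1 h2 :: "real^'m::finite \<Rightarrow> real"
  assumes "h1 differentiable (at p)" "h2 differentiable (at p)"
  shows "partial i (\<lambda>q. h1 q * h2 q) p = partial i h1 p * h2 p + h1 p * partial i h2 p"
  unfolding partial_def[of i "\<lambda>q. h1 q * h2 q"]
  by (rule DERIV_imp_deriv)
     (use DERIV_mult[OF has_real_derivative_partial_at_0[OF assms(1)]
                        has_real_derivative_partial_at_0[OF assms(2)]] in \<open>auto simp: mult.commute\<close>)

lemma partial_cmult:
  fixes h :: "real^'m::finite \<Rightarrow> real"
  assumes "h differentiable (at p)"
  shows "partial i (\<lambda>q. c * h q) p = c * partial i h p"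
  using partial_mult[of "\<lambda>q. c" p h i] assms by simp

lemma partial_sum:
  fixes h :: "'k \<Rightarrow> real^'m::finite \<Rightarrow> real"
  assumes "finite S" "\<And>k. k \<in> S \<Longrightarrow> h k differentiable (at p)"
  shows "partial i (\<lambda>q. \<Sum>k\<in>S. h k q) p = (\<Sum>k\<in>S. partial i (h k) p)"
  unfolding partial_def[of i "\<lambda>q. \<Sum>k\<in>S. h k q"]
  by (rule DERIV_imp_deriv)
     (rule DERIV_sum, use has_real_derivative_partial_at_0[OF assms(2)] in auto)

lemma iter_partial_append: "iter_partial (is @ js) h = iter_partial is (iter_partial js h)"
  by (induction "is") auto

lemma smooth_fun_on_partial: "smooth_fun_on U h \<Longrightarrow> smooth_fun_on U (partial i h)"
  unfolding smooth_fun_on_def by (metis iter_partial.simps iter_partial_append)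

lemma smooth_fun_on_imp_differentiable:
  "smooth_fun_on U h \<Longrightarrow> open U \<Longrightarrow> q \<in> U \<Longrightarrow> h differentiable (at q)"
  unfolding smooth_fun_on_def
  by (metis iter_partial.simps(1) differentiable_on_eq_differentiable_at)

lemma second_difference_mean_value:
  fixes h :: "real^'m::finite \<Rightarrow> real"
  assumes sm: "smooth_fun_on U h" and U: "open U" and t: "0 < t"
    and square: "\<And>s r. 0 \<le> s \<Longrightarrow> s \<le> t \<Longrightarrow> 0 \<le> r \<Longrightarrow> r \<le> t \<Longrightarrow>
                   p + s *\<^sub>R axis a 1 + r *\<^sub>R axis b 1 \<in> U"
  obtains \<sigma> \<tau> where "0 < \<sigma>" "\<sigma> < t" "0 < \<tau>" "\<tau> < t"
    "h (p + t *\<^sub>R axis a 1 + t *\<^sub>R axis b 1) - h (p + t *\<^sub>R axis a 1) - h (p + t *\<^sub>R axis b 1) + h p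
      = t\<^sup>2 * partial b (partial a h) (p + \<sigma> *\<^sub>R axis a 1 + \<tau> *\<^sub>R axis b 1)"
proof -
  define u v :: "real^'m" where "u = axis a 1" and "v = axis b 1"
  define \<delta> where "\<delta> s = h ((p + t *\<^sub>R v) + s *\<^sub>R u) - h (p + s *\<^sub>R u)" for s
  have d\<delta>: "(\<delta> has_real_derivative (partial a h ((p + t *\<^sub>R v) + s *\<^sub>R u) - partial a h (p + s *\<^sub>R u))) (at s)"
    if "0 \<le> s" "s \<le> t" for s
  proof -
    have "(p + t *\<^sub>R v) + s *\<^sub>R u \<in> U" "p + s *\<^sub>R u \<in> U"
      using square[of s t] square[of s 0] that t by (simp_all add: u_def v_def algebra_simps)
    then show ?thesis unfolding \<delta>_def u_def
      by (intro DERIV_diff has_real_derivative_partial smooth_fun_on_imp_differentiable[OF sm U])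
         (simp_all add: u_def)
  qed
  obtain \<sigma> where \<sigma>: "0 < \<sigma>" "\<sigma> < t"
    and \<delta>: "\<delta> t - \<delta> 0 = t * (partial a h ((p + t *\<^sub>R v) + \<sigma> *\<^sub>R u) - partial a h (p + \<sigma> *\<^sub>R u))"
    using MVT2[OF t, of \<delta> "\<lambda>s. partial a h ((p + t *\<^sub>R v) + s *\<^sub>R u) - partial a h (p + s *\<^sub>R u)"] d\<delta>
    by auto
  define \<gamma> where "\<gamma> r = partial a h ((p + \<sigma> *\<^sub>R u) + r *\<^sub>R v)" for r
  have d\<gamma>: "(\<gamma> has_real_derivative partial b (partial a h) ((p + \<sigma> *\<^sub>R u) + r *\<^sub>R v)) (at r)"
    if "0 \<le> r" "r \<le> t" for r
  proof -
    have "(p + \<sigma> *\<^sub>R u) + r *\<^sub>R v \<in> U" using square[of \<sigma> r] that \<sigma> by (simp add: u_def v_def)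
    then show ?thesis unfolding \<gamma>_def v_def
      by (intro has_real_derivative_partial smooth_fun_on_imp_differentiable[OF _ U]
                smooth_fun_on_partial sm) (simp add: v_def)
  qed
  obtain \<tau> where \<tau>: "0 < \<tau>" "\<tau> < t"
    and \<gamma>: "\<gamma> t - \<gamma> 0 = t * partial b (partial a h) ((p + \<sigma> *\<^sub>R u) + \<tau> *\<^sub>R v)"
    using MVT2[OF t, of \<gamma> "\<lambda>r. partial b (partial a h) ((p + \<sigma> *\<^sub>R u) + r *\<^sub>R v)"] d\<gamma>
    by auto
  have "\<delta> t - \<delta> 0 = t * (\<gamma> t - \<gamma> 0)"
    unfolding \<delta> \<gamma>_def by (simp add: algebra_simps)
  then have "h (p + t *\<^sub>R axis a 1 + t *\<^sub>R axis b 1) - h (p + t *\<^sub>R axis a 1) - h (p + t *\<^sub>R axis b 1) + h p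
      = t\<^sup>2 * partial b (partial a h) (p + \<sigma> *\<^sub>R axis a 1 + \<tau> *\<^sub>R axis b 1)"
    using \<gamma> unfolding \<delta>_def u_def v_def by (simp add: algebra_simps power2_eq_square)
  then show ?thesis
    using that \<sigma> \<tau> by blast
qed

lemma dist_add_axes_le:
  fixes p :: "real^'m::finite"
  shows "dist (p + s *\<^sub>R axis i 1 + r *\<^sub>R axis j 1) p \<le> \<bar>s\<bar> + \<bar>r\<bar>"
proof -
  have "dist (p + s *\<^sub>R axis i 1 + r *\<^sub>R axis j 1) p = norm (s *\<^sub>R axis i 1 + r *\<^sub>R (axis j 1 :: real^'m))"
    by (simp add: dist_norm)
  also have "\<dots> \<le> norm (s *\<^sub>R (axis i 1 :: real^'m)) + norm (r *\<^sub>R (axis j 1 :: real^'m))"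
    by (rule norm_triangle_ineq)
  finally show ?thesis by simp
qed

text \<open>Both mixed partials are limits of the same second difference quotient.\<close>

lemma partial_commute:
  fixes h :: "real^'m::finite \<Rightarrow> real"
  assumes sm: "smooth_fun_on U h" and U: "open U" and p: "p \<in> U"
  shows "partial a (partial b h) p = partial b (partial a h) p"
proof (rule ccontr)
  define D1 D2 where "D1 = partial b (partial a h)" and "D2 = partial a (partial b h)"
  define d where "d = \<bar>D1 p - D2 p\<bar>"
  assume "partial a (partial b h) p \<noteq> partial b (partial a h) p"
  then have d: "d / 2 > 0" by (simp add: d_def D1_def D2_def)
  have "continuous (at p) D1" "continuous (at p) D2"
    unfolding D1_def D2_def using sm U p
    by (auto intro!: differentiable_imp_continuous_within smooth_fun_on_imp_differentiable
                     smooth_fun_on_partial)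
  then obtain d1 d2 where d12: "d1 > 0" "d2 > 0"
    and D1: "\<And>q. dist q p < d1 \<Longrightarrow> dist (D1 q) (D1 p) < d / 2"
    and D2: "\<And>q. dist q p < d2 \<Longrightarrow> dist (D2 q) (D2 p) < d / 2"
    using d unfolding continuous_at_eps_delta by metis
  obtain e where e: "e > 0" "ball p e \<subseteq> U"
    using U p open_contains_ball by blast
  define t where "t = Min {d1, d2, e} / 4"
  have t: "0 < t" "2 * t < d1" "2 * t < d2" "2 * t < e"
    using d12 e by (auto simp: t_def)
  have square: "p + s *\<^sub>R axis i 1 + r *\<^sub>R axis j 1 \<in> U"
    if "0 \<le> s" "s \<le> t" "0 \<le> r" "r \<le> t" for s r and i j :: 'm
  proof -
    have "dist p (p + s *\<^sub>R axis i 1 + r *\<^sub>R axis j 1) < e"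
      using dist_add_axes_le[of p s i r j] that t by (simp add: dist_commute)
    then show ?thesis using e by auto
  qed
  obtain \<sigma> \<tau> where st: "0 < \<sigma>" "\<sigma> < t" "0 < \<tau>" "\<tau> < t"
    and E1: "h (p + t *\<^sub>R axis a 1 + t *\<^sub>R axis b 1) - h (p + t *\<^sub>R axis a 1) - h (p + t *\<^sub>R axis b 1) + h p
      = t\<^sup>2 * D1 (p + \<sigma> *\<^sub>R axis a 1 + \<tau> *\<^sub>R axis b 1)"
    using second_difference_mean_value[OF sm U t(1), of p a b] square unfolding D1_def by blast
  obtain \<sigma>' \<tau>' where st': "0 < \<sigma>'" "\<sigma>' < t" "0 < \<tau>'" "\<tau>' < t"
    and E2: "h (p + t *\<^sub>R axis b 1 + t *\<^sub>R axis a 1) - h (p + t *\<^sub>R axis b 1) - h (p + t *\<^sub>R axis a 1) + h p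
      = t\<^sup>2 * D2 (p + \<sigma>' *\<^sub>R axis b 1 + \<tau>' *\<^sub>R axis a 1)"
    using second_difference_mean_value[OF sm U t(1), of p b a] square unfolding D2_def by blast
  have "D1 (p + \<sigma> *\<^sub>R axis a 1 + \<tau> *\<^sub>R axis b 1) = D2 (p + \<sigma>' *\<^sub>R axis b 1 + \<tau>' *\<^sub>R axis a 1)"
    using E1 E2 t(1) by (simp add: algebra_simps)
  moreover have "dist (D1 (p + \<sigma> *\<^sub>R axis a 1 + \<tau> *\<^sub>R axis b 1)) (D1 p) < d / 2"
    using D1 dist_add_axes_le[of p \<sigma> a \<tau> b] st t by force
  moreover have "dist (D2 (p + \<sigma>' *\<^sub>R axis b 1 + \<tau>' *\<^sub>R axis a 1)) (D2 p) < d / 2"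
    using D2 dist_add_axes_le[of p \<sigma>' b \<tau>' a] st' t by force
  ultimately have "\<bar>D1 p - D2 p\<bar> < d"
    unfolding dist_real_def by linarith
  then show False by (simp add: d_def)
qed

lemma differentiable_prod:
  fixes f :: "'i \<Rightarrow> 'a::real_normed_vector \<Rightarrow> real"
  assumes "\<And>i. i \<in> I \<Longrightarrow> f i differentiable (at x)"
  shows "(\<lambda>x. \<Prod>i\<in>I. f i x) differentiable (at x)"
proof -
  from assms obtain D where "\<And>i. i \<in> I \<Longrightarrow> (f i has_derivative D i) (at x)"
    unfolding differentiable_def by metis
  then show ?thesis
    unfolding differentiable_def by (blast intro: has_derivative_prod)
qed

lemma differentiable_det:
  fixes M :: "'a::real_normed_vector \<Rightarrow> real^'n::finite^'n"
  assumes "\<And>i j. (\<lambda>q. M q $ i $ j) differentiable (at p)"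
  shows "(\<lambda>q. det (M q)) differentiable (at p)"
  unfolding det_def
  by (intro differentiable_sum ballI differentiable_mult differentiable_const differentiable_prod assms)
     auto

lemma matrix_inv_mult_cancel:
  fixes A :: "real^'n::finite^'n"
  assumes "invertible A"
  shows "A ** matrix_inv A = mat 1" "matrix_inv A ** A = mat 1"
  using someI_ex[OF assms[unfolded invertible_def]] by (simp_all add: matrix_inv_def)

lemma matrix_inv_cramer:
  fixes A :: "real^'n::finite^'n"
  assumes "invertible A"
  shows "matrix_inv A $ k $ l = det (\<chi> i j. if j = k then axis l 1 $ i else A $ i $ j) / det A"
proof -
  have "A *v (matrix_inv A *v axis l 1) = axis l 1"
    using matrix_inv_mult_cancel(1)[OF assms] by (simp add: matrix_vector_mul_assoc)
  then have "matrix_inv A *v axis l 1 = (\<chi> k. det (\<chi> i j. if j = k then axis l 1 $ i else A $ i $ j) / det A)"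
    using cramer[of A] assms invertible_det_nz by blast
  then show ?thesis
    by (simp add: matrix_vector_mult_basis column_def vec_eq_iff)
qed

lemma differentiable_matrix_inv:
  fixes M :: "'a::real_normed_vector \<Rightarrow> real^'n::finite^'n"
  assumes "open U" "p \<in> U" "\<And>q. q \<in> U \<Longrightarrow> invertible (M q)"
    and "\<And>i j. (\<lambda>q. M q $ i $ j) differentiable (at p)"
  shows "(\<lambda>q. matrix_inv (M q) $ k $ l) differentiable (at p)"
proof -
  have "(\<lambda>q. det (\<chi> i j. if j = k then axis l 1 $ i else M q $ i $ j) / det (M q)) differentiable (at p)"
  proof (intro differentiable_divide differentiable_det)
    show "det (M p) \<noteq> 0" using assms(2,3) invertible_det_nz by blast
    fix i j
    show "(\<lambda>q. (\<chi> i j. if j = k then (axis l 1 :: real^'n) $ i else M q $ i $ j) $ i $ j) differentiable (at p)"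
      using assms(4)[of i j] by (cases "j = k") auto
  qed (use assms(4) in auto)
  then obtain D where "((\<lambda>q. det (\<chi> i j. if j = k then axis l 1 $ i else M q $ i $ j) / det (M q))
      has_derivative D) (at p)"
    unfolding differentiable_def by blast
  then have "((\<lambda>q. matrix_inv (M q) $ k $ l) has_derivative D) (at p)"
    by (rule has_derivative_transform_within_open[OF _ assms(1,2)]) (simp add: matrix_inv_cramer assms(3))
  then show ?thesis
    unfolding differentiable_def by blast
qed

section \<open>The contracted Ricci identity\<close>

lemma mult_if_zero:
  "(x::real) * (if P then y else 0) = (if P then x * y else 0)"
  "(if P then y else 0) * (x::real) = (if P then y * x else 0)"
  by auto

text \<open>In the next three lemmas read \<open>dx a c\<close> and \<open>ddx a b c\<close> as \<open>\<partial>\<^sub>a x\<^sup>c\<close> and \<open>\<partial>\<^sub>a \<partial>\<^sub>b x\<^sup>c\<close> for a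
  vector field \<open>x\<close>, \<open>d\<Gamma> a\<close> as \<open>\<partial>\<^sub>a\<close> of the Christoffel symbols \<open>\<Gamma>\<close>, \<open>W k b\<close> as \<open>(\<nabla>\<^sub>b x)\<^sup>k\<close>
  and \<open>dW a k b\<close> as \<open>\<partial>\<^sub>a W k b\<close>. The identity is then
  \<open>\<rho>(x, \<partial>\<^sub>b) = (\<nabla>\<^sub>k \<nabla>\<^sub>b x)\<^sup>k - (\<nabla>\<^sub>b \<nabla>\<^sub>k x)\<^sup>k\<close>.\<close>

lemma ricci_derivative_terms_contracted:
  fixes x :: "'m::finite \<Rightarrow> real" and \<Gamma> :: "'m \<Rightarrow> 'm \<Rightarrow> 'm \<Rightarrow> real"
    and d\<Gamma> :: "'m \<Rightarrow> 'm \<Rightarrow> 'm \<Rightarrow> 'm \<Rightarrow> real" and dx :: "'m \<Rightarrow> 'm \<Rightarrow> real"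
    and ddx dW :: "'m \<Rightarrow> 'm \<Rightarrow> 'm \<Rightarrow> real"
  assumes ddx: "\<And>a b k. ddx a b k + (\<Sum>c\<in>UNIV. d\<Gamma> a k b c * x c + \<Gamma> k b c * dx a c) = dW a k b"
    and ddx_sym: "\<And>a b k. ddx a b k = ddx b a k"
    and d\<Gamma>_sym: "\<And>a k i j. d\<Gamma> a k i j = d\<Gamma> a k j i"
  shows "(\<Sum>c\<in>UNIV. x c * ((\<Sum>k\<in>UNIV. d\<Gamma> k k c b) - (\<Sum>k\<in>UNIV. d\<Gamma> b k c k)))
      = (\<Sum>k\<in>UNIV. dW k k b - dW b k k)
        - (\<Sum>a\<in>UNIV. \<Sum>c\<in>UNIV. \<Gamma> a b c * dx a c) + (\<Sum>a\<in>UNIV. \<Sum>c\<in>UNIV. \<Gamma> a a c * dx b c)"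
proof -
  have "(\<Sum>a\<in>UNIV. ddx a b a + (\<Sum>c\<in>UNIV. d\<Gamma> a a b c * x c + \<Gamma> a b c * dx a c)) = (\<Sum>a\<in>UNIV. dW a a b)"
    using ddx by simp
  then have s1: "(\<Sum>a\<in>UNIV. ddx a b a) + (\<Sum>a\<in>UNIV. \<Sum>c\<in>UNIV. d\<Gamma> a a b c * x c)
      + (\<Sum>a\<in>UNIV. \<Sum>c\<in>UNIV. \<Gamma> a b c * dx a c) = (\<Sum>a\<in>UNIV. dW a a b)"
    by (simp add: sum.distrib add.assoc)
  have "(\<Sum>a\<in>UNIV. ddx b a a + (\<Sum>c\<in>UNIV. d\<Gamma> b a a c * x c + \<Gamma> a a c * dx b c)) = (\<Sum>a\<in>UNIV. dW b a a)"
    using ddx by simp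
  then have s2: "(\<Sum>a\<in>UNIV. ddx b a a) + (\<Sum>a\<in>UNIV. \<Sum>c\<in>UNIV. d\<Gamma> b a a c * x c)
      + (\<Sum>a\<in>UNIV. \<Sum>c\<in>UNIV. \<Gamma> a a c * dx b c) = (\<Sum>a\<in>UNIV. dW b a a)"
    by (simp add: sum.distrib add.assoc)
  have "(\<Sum>c\<in>UNIV. x c * ((\<Sum>k\<in>UNIV. d\<Gamma> k k c b) - (\<Sum>k\<in>UNIV. d\<Gamma> b k c k)))
      = (\<Sum>c\<in>UNIV. \<Sum>k\<in>UNIV. x c * d\<Gamma> k k c b) - (\<Sum>c\<in>UNIV. \<Sum>k\<in>UNIV. x c * d\<Gamma> b k c k)"
    by (simp add: sum_distrib_left right_diff_distrib sum_subtractf)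
  also have "(\<Sum>c\<in>UNIV. \<Sum>k\<in>UNIV. x c * d\<Gamma> k k c b) = (\<Sum>a\<in>UNIV. \<Sum>c\<in>UNIV. d\<Gamma> a a b c * x c)"
  proof -
    have eq: "x c * d\<Gamma> a a c b = d\<Gamma> a a b c * x c" for a c
      by (simp add: d\<Gamma>_sym[of a a c b] mult.commute)
    show ?thesis by (subst sum.swap) (simp only: eq)
  qed
  also have "(\<Sum>c\<in>UNIV. \<Sum>k\<in>UNIV. x c * d\<Gamma> b k c k) = (\<Sum>a\<in>UNIV. \<Sum>c\<in>UNIV. d\<Gamma> b a a c * x c)"
  proof -
    have eq: "x c * d\<Gamma> b a c a = d\<Gamma> b a a c * x c" for a c
      by (simp add: d\<Gamma>_sym[of b a c a] mult.commute)
    show ?thesis by (subst sum.swap) (simp only: eq)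
  qed
  moreover have "(\<Sum>a\<in>UNIV. ddx a b a) = (\<Sum>a\<in>UNIV. ddx b a a)"
    using ddx_sym by simp
  moreover have "(\<Sum>k\<in>UNIV. dW k k b - dW b k k) = (\<Sum>k\<in>UNIV. dW k k b) - (\<Sum>k\<in>UNIV. dW b k k)"
    by (rule sum_subtractf)
  ultimately show ?thesis
    using s1 s2 by linarith
qed

lemma ricci_quadratic_terms_contracted:
  fixes x :: "'m::finite \<Rightarrow> real" and \<Gamma> :: "'m \<Rightarrow> 'm \<Rightarrow> 'm \<Rightarrow> real" and dx W :: "'m \<Rightarrow> 'm \<Rightarrow> real"
  assumes dx: "\<And>a b. dx b a = W a b - (\<Sum>c\<in>UNIV. \<Gamma> a b c * x c)"
    and \<Gamma>_sym: "\<And>k i j. \<Gamma> k i j = \<Gamma> k j i"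
  shows "(\<Sum>c\<in>UNIV. x c * (\<Sum>k\<in>UNIV. \<Sum>l\<in>UNIV. \<Gamma> k k l * \<Gamma> l c b - \<Gamma> k b l * \<Gamma> l c k))
      = (\<Sum>k\<in>UNIV. \<Sum>l\<in>UNIV. \<Gamma> k k l * W l b - \<Gamma> k b l * W l k)
        + (\<Sum>a\<in>UNIV. \<Sum>c\<in>UNIV. \<Gamma> a b c * dx a c) - (\<Sum>a\<in>UNIV. \<Sum>c\<in>UNIV. \<Gamma> a a c * dx b c)"
proof -
  define Q1 Q2 where "Q1 = (\<Sum>a\<in>UNIV. \<Sum>c\<in>UNIV. \<Sum>d\<in>UNIV. \<Gamma> a b c * \<Gamma> c a d * x d)"
    and "Q2 = (\<Sum>a\<in>UNIV. \<Sum>c\<in>UNIV. \<Sum>d\<in>UNIV. \<Gamma> a a c * \<Gamma> c b d * x d)"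
  have T1: "(\<Sum>a\<in>UNIV. \<Sum>c\<in>UNIV. \<Gamma> a b c * dx a c) = (\<Sum>a\<in>UNIV. \<Sum>c\<in>UNIV. \<Gamma> a b c * W c a) - Q1"
    unfolding Q1_def dx by (simp add: algebra_simps sum_subtractf sum_distrib_left)
  have T2: "(\<Sum>a\<in>UNIV. \<Sum>c\<in>UNIV. \<Gamma> a a c * dx b c) = (\<Sum>a\<in>UNIV. \<Sum>c\<in>UNIV. \<Gamma> a a c * W c b) - Q2"
    unfolding Q2_def dx by (simp add: algebra_simps sum_subtractf sum_distrib_left)
  have "(\<Sum>c\<in>UNIV. \<Sum>k\<in>UNIV. \<Sum>l\<in>UNIV. x c * (\<Gamma> k k l * \<Gamma> l c b))
      = (\<Sum>k\<in>UNIV. \<Sum>l\<in>UNIV. \<Sum>c\<in>UNIV. x c * (\<Gamma> k k l * \<Gamma> l c b))"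
    by (subst sum.swap) (rule sum.cong[OF refl], rule sum.swap)
  also have "\<dots> = Q2"
  proof -
    have "x c * (\<Gamma> k k l * \<Gamma> l c b) = \<Gamma> k k l * \<Gamma> l b c * x c" for k l c
      by (simp add: \<Gamma>_sym[of l c b] mult_ac)
    then show ?thesis unfolding Q2_def by (simp only:)
  qed
  finally have Q2: "(\<Sum>c\<in>UNIV. \<Sum>k\<in>UNIV. \<Sum>l\<in>UNIV. x c * (\<Gamma> k k l * \<Gamma> l c b)) = Q2" .
  have "(\<Sum>c\<in>UNIV. \<Sum>k\<in>UNIV. \<Sum>l\<in>UNIV. x c * (\<Gamma> k b l * \<Gamma> l c k))
      = (\<Sum>k\<in>UNIV. \<Sum>l\<in>UNIV. \<Sum>c\<in>UNIV. x c * (\<Gamma> k b l * \<Gamma> l c k))"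
    by (subst sum.swap) (rule sum.cong[OF refl], rule sum.swap)
  also have "\<dots> = Q1"
  proof -
    have "x c * (\<Gamma> k b l * \<Gamma> l c k) = \<Gamma> k b l * \<Gamma> l k c * x c" for k l c
      by (simp add: \<Gamma>_sym[of l c k] mult_ac)
    then show ?thesis unfolding Q1_def by (simp only:)
  qed
  finally have Q1: "(\<Sum>c\<in>UNIV. \<Sum>k\<in>UNIV. \<Sum>l\<in>UNIV. x c * (\<Gamma> k b l * \<Gamma> l c k)) = Q1" .
  have "(\<Sum>c\<in>UNIV. x c * (\<Sum>k\<in>UNIV. \<Sum>l\<in>UNIV. \<Gamma> k k l * \<Gamma> l c b - \<Gamma> k b l * \<Gamma> l c k))
      = (\<Sum>c\<in>UNIV. \<Sum>k\<in>UNIV. \<Sum>l\<in>UNIV. x c * (\<Gamma> k k l * \<Gamma> l c b))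
        - (\<Sum>c\<in>UNIV. \<Sum>k\<in>UNIV. \<Sum>l\<in>UNIV. x c * (\<Gamma> k b l * \<Gamma> l c k))"
    by (simp add: sum_distrib_left right_diff_distrib sum_subtractf)
  moreover have "(\<Sum>k\<in>UNIV. \<Sum>l\<in>UNIV. \<Gamma> k k l * W l b - \<Gamma> k b l * W l k)
      = (\<Sum>a\<in>UNIV. \<Sum>c\<in>UNIV. \<Gamma> a a c * W c b) - (\<Sum>a\<in>UNIV. \<Sum>c\<in>UNIV. \<Gamma> a b c * W c a)"
    by (simp add: sum_subtractf)
  ultimately show ?thesis
    using T1 T2 Q1 Q2 by linarith
qed

lemma contracted_ricci_identity:
  fixes x :: "'m::finite \<Rightarrow> real" and \<Gamma> :: "'m \<Rightarrow> 'm \<Rightarrow> 'm \<Rightarrow> real"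
    and d\<Gamma> :: "'m \<Rightarrow> 'm \<Rightarrow> 'm \<Rightarrow> 'm \<Rightarrow> real" and dx W :: "'m \<Rightarrow> 'm \<Rightarrow> real"
    and ddx dW :: "'m \<Rightarrow> 'm \<Rightarrow> 'm \<Rightarrow> real"
  assumes "\<And>a b. dx b a = W a b - (\<Sum>c\<in>UNIV. \<Gamma> a b c * x c)"
    and "\<And>a b k. ddx a b k + (\<Sum>c\<in>UNIV. d\<Gamma> a k b c * x c + \<Gamma> k b c * dx a c) = dW a k b"
    and "\<And>a b k. ddx a b k = ddx b a k"
    and "\<And>k i j. \<Gamma> k i j = \<Gamma> k j i"
    and "\<And>a k i j. d\<Gamma> a k i j = d\<Gamma> a k j i"
  shows "(\<Sum>c\<in>UNIV. x c * ((\<Sum>k\<in>UNIV. d\<Gamma> k k c b) - (\<Sum>k\<in>UNIV. d\<Gamma> b k c k)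
            + (\<Sum>k\<in>UNIV. \<Sum>l\<in>UNIV. \<Gamma> k k l * \<Gamma> l c b - \<Gamma> k b l * \<Gamma> l c k)))
       = (\<Sum>k\<in>UNIV. dW k k b - dW b k k) + (\<Sum>k\<in>UNIV. \<Sum>l\<in>UNIV. \<Gamma> k k l * W l b - \<Gamma> k b l * W l k)"
  using ricci_derivative_terms_contracted[OF assms(2,3,5), where b = b]
    ricci_quadratic_terms_contracted[OF assms(1,4), where b = b]
  by (simp add: distrib_left sum.distrib)

lemma concircular_partial_traces:
  fixes x e :: "'m::finite \<Rightarrow> real" and \<Gamma> :: "'m \<Rightarrow> 'm \<Rightarrow> 'm \<Rightarrow> real"
    and dx :: "'m \<Rightarrow> 'm \<Rightarrow> real" and F :: real
  assumes dx: "\<And>a b. dx b a = F * (if a = b then 1 else 0) - F * e b * x a - (\<Sum>c\<in>UNIV. \<Gamma> a b c * x c)"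
    and ex: "(\<Sum>i\<in>UNIV. e i * x i) = 1"
  shows "(\<Sum>a\<in>UNIV. dx a a) = real CARD('m) * F - F - (\<Sum>a\<in>UNIV. \<Sum>c\<in>UNIV. \<Gamma> a a c * x c)"
    and "(\<Sum>b\<in>UNIV. \<Sum>a\<in>UNIV. x b * (e a * dx b a))
      = - (\<Sum>b\<in>UNIV. \<Sum>a\<in>UNIV. \<Sum>c\<in>UNIV. x b * e a * \<Gamma> a b c * x c)"
proof -
  have ex': "(\<Sum>i\<in>UNIV. x i * e i) = 1"
    using ex by (simp add: mult.commute)
  have exF: "(\<Sum>a\<in>UNIV. F * (e a * x a)) = F" "(\<Sum>a\<in>UNIV. F * (x a * e a)) = F"
    using ex ex' by (simp_all flip: sum_distrib_left)
  show "(\<Sum>a\<in>UNIV. dx a a) = real CARD('m) * F - F - (\<Sum>a\<in>UNIV. \<Sum>c\<in>UNIV. \<Gamma> a a c * x c)"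
    unfolding dx using ex' exF
    by (simp add: sum_subtractf sum.distrib sum_distrib_left mult_if_zero mult_ac)
  have "(\<Sum>b\<in>UNIV. \<Sum>a\<in>UNIV. F * (e b * (e a * (x b * x a))))
      = (\<Sum>b\<in>UNIV. F * (e b * x b) * (\<Sum>a\<in>UNIV. e a * x a))"
    by (simp add: sum_distrib_left mult_ac)
  then have exx: "(\<Sum>b\<in>UNIV. \<Sum>a\<in>UNIV. F * (e b * (e a * (x b * x a)))) = F"
    using ex exF by simp
  show "(\<Sum>b\<in>UNIV. \<Sum>a\<in>UNIV. x b * (e a * dx b a))
      = - (\<Sum>b\<in>UNIV. \<Sum>a\<in>UNIV. \<Sum>c\<in>UNIV. x b * e a * \<Gamma> a b c * x c)"
    unfolding dx using ex' ex exx exF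
    by (simp add: algebra_simps sum_subtractf sum.distrib sum_distrib_left mult_if_zero)
qed

text \<open>The right-hand side of the contracted Ricci identity for \<open>\<nabla>x = F (id - e \<otimes> x)\<close> with constant \<open>F\<close>.\<close>

lemma contracted_ricci_identity_concircular:
  fixes x e :: "'m::finite \<Rightarrow> real" and \<Gamma> :: "'m \<Rightarrow> 'm \<Rightarrow> 'm \<Rightarrow> real"
    and dx de :: "'m \<Rightarrow> 'm \<Rightarrow> real" and F :: real
  defines "W \<equiv> \<lambda>a b. F * (if a = b then 1 else 0) - F * e b * x a"
    and "dW \<equiv> \<lambda>a k b. - F * (de a b * x k + e b * dx a k)"
  assumes dx: "\<And>a b. dx b a = W a b - (\<Sum>c\<in>UNIV. \<Gamma> a b c * x c)"
    and \<Gamma>_sym: "\<And>k i j. \<Gamma> k i j = \<Gamma> k j i"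
    and ex: "(\<Sum>i\<in>UNIV. e i * x i) = 1"
  shows "(\<Sum>b\<in>UNIV. x b * ((\<Sum>k\<in>UNIV. dW k k b - dW b k k)
            + (\<Sum>k\<in>UNIV. \<Sum>l\<in>UNIV. \<Gamma> k k l * W l b - \<Gamma> k b l * W l k)))
         = - (real CARD('m) - 1) * F\<^sup>2"
proof -
  define A1 where "A1 = (\<Sum>a\<in>UNIV. \<Sum>c\<in>UNIV. \<Gamma> a a c * x c)"
  define A2 where "A2 = (\<Sum>b\<in>UNIV. \<Sum>a\<in>UNIV. \<Sum>c\<in>UNIV. x b * e a * \<Gamma> a b c * x c)"
  define A3 where "A3 = (\<Sum>b\<in>UNIV. \<Sum>a\<in>UNIV. x b * \<Gamma> a a b)"
  have traces: "(\<Sum>a\<in>UNIV. dx a a) = real CARD('m) * F - F - A1"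
      "(\<Sum>b\<in>UNIV. \<Sum>a\<in>UNIV. x b * (e a * dx b a)) = - A2"
    using concircular_partial_traces[of dx F e x \<Gamma>] dx ex by (simp_all add: W_def A1_def A2_def)
  have ex': "(\<Sum>i\<in>UNIV. x i * e i) = 1"
    using ex by (simp add: mult.commute)
  have "(\<Sum>b\<in>UNIV. \<Sum>n\<in>UNIV. \<Sum>m\<in>UNIV. F * (e b * (x b * (x m * \<Gamma> n n m))))
      = (\<Sum>b\<in>UNIV. e b * x b) * (\<Sum>n\<in>UNIV. \<Sum>m\<in>UNIV. F * (x m * \<Gamma> n n m))"
    unfolding sum_distrib_right by (simp add: sum_distrib_left mult_ac)
  then have exG: "(\<Sum>b\<in>UNIV. \<Sum>n\<in>UNIV. \<Sum>m\<in>UNIV. F * (e b * (x b * (x m * \<Gamma> n n m))))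
      = (\<Sum>n\<in>UNIV. \<Sum>m\<in>UNIV. F * (x m * \<Gamma> n n m))"
    using ex by simp
  have de_swap: "(\<Sum>b\<in>UNIV. \<Sum>a\<in>UNIV. x b * (de a b * x a)) = (\<Sum>b\<in>UNIV. \<Sum>a\<in>UNIV. x b * (de b a * x a))"
    by (subst sum.swap) (simp add: mult_ac)
  have "(\<Sum>b\<in>UNIV. x b * (\<Sum>k\<in>UNIV. dW k k b - dW b k k))
      = - F * (\<Sum>b\<in>UNIV. \<Sum>a\<in>UNIV. x b * (de a b * x a))
        - F * ((\<Sum>b\<in>UNIV. x b * e b) * (\<Sum>a\<in>UNIV. dx a a))
        + F * (\<Sum>b\<in>UNIV. \<Sum>a\<in>UNIV. x b * (de b a * x a))
        + F * (\<Sum>b\<in>UNIV. \<Sum>a\<in>UNIV. x b * (e a * dx b a))"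
    unfolding dW_def
    by (simp add: algebra_simps sum.distrib sum_distrib_left sum_distrib_right sum_subtractf sum_negf)
  then have dW_terms: "(\<Sum>b\<in>UNIV. x b * (\<Sum>k\<in>UNIV. dW k k b - dW b k k))
      = - F * (real CARD('m) * F - F - A1) - F * A2"
    using de_swap ex' traces by simp
  have W_terms1: "(\<Sum>b\<in>UNIV. x b * (\<Sum>k\<in>UNIV. \<Sum>l\<in>UNIV. \<Gamma> k b l * W l k)) = F * A3 - F * A2"
    unfolding W_def A2_def A3_def
    by (simp add: algebra_simps sum_subtractf sum.distrib sum_distrib_left mult_if_zero \<Gamma>_sym)
  have W_terms2: "(\<Sum>b\<in>UNIV. x b * (\<Sum>k\<in>UNIV. \<Sum>l\<in>UNIV. \<Gamma> k k l * W l b)) = F * A3 - F * A1"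
    unfolding W_def A1_def A3_def using ex' exG
    by (simp add: algebra_simps sum_subtractf sum.distrib sum_distrib_left mult_if_zero)
  have "(\<Sum>b\<in>UNIV. x b * ((\<Sum>k\<in>UNIV. dW k k b - dW b k k)
            + (\<Sum>k\<in>UNIV. \<Sum>l\<in>UNIV. \<Gamma> k k l * W l b - \<Gamma> k b l * W l k)))
      = (\<Sum>b\<in>UNIV. x b * (\<Sum>k\<in>UNIV. dW k k b - dW b k k))
        + (\<Sum>b\<in>UNIV. x b * (\<Sum>k\<in>UNIV. \<Sum>l\<in>UNIV. \<Gamma> k k l * W l b))
        - (\<Sum>b\<in>UNIV. x b * (\<Sum>k\<in>UNIV. \<Sum>l\<in>UNIV. \<Gamma> k b l * W l k))"
    by (simp add: algebra_simps sum.distrib sum_subtractf)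
  then show ?thesis
    using dW_terms W_terms1 W_terms2 by (simp add: algebra_simps power2_eq_square)
qed

section \<open>The Levi-Civita connection of a metric chart\<close>

lemma gform_add_left: "gform g p (x + y) z = gform g p x z + gform g p y z"
  by (simp add: gform_def inner_add_left)

lemma gform_scaleR_left: "gform g p (c *\<^sub>R x) z = c * gform g p x z"
  by (simp add: gform_def)

lemma gform_diff_left: "gform g p (x - y) z = gform g p x z - gform g p y z"
  by (simp add: gform_def inner_diff_left)

lemma gform_axis_left: "gform g p (axis i 1) y = (\<Sum>k\<in>UNIV. g p $ i $ k * y $ k)"
  by (simp add: gform_def inner_axis' matrix_vector_mult_def)

lemma gform_axis_axis: "gform g p (axis i 1) (axis j 1) = g p $ i $ j"
  unfolding gform_axis_left by (simp add: axis_def mult_if_zero)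

lemma gform_axis_right: "gform g p x (axis j 1) = (\<Sum>k\<in>UNIV. x $ k * g p $ k $ j)"
  by (simp add: gform_def matrix_vector_mult_basis column_def inner_vec_def)

lemma sum_axis_mult [simp]:
  fixes f :: "'n::finite \<Rightarrow> real"
  shows "(\<Sum>i\<in>UNIV. axis k 1 $ i * f i) = f k"
  by (simp add: axis_def mult_if_zero)

lemma levi_civita_axis:
  "levi_civita g (axis i 1) X p $ k = partial i (\<lambda>q. X q $ k) p + (\<Sum>j\<in>UNIV. christoffel g p k i j * X p $ j)"
proof -
  have "(\<Sum>l\<in>UNIV. \<Sum>j\<in>UNIV. christoffel g p k l j * axis i 1 $ l * X p $ j)
      = (\<Sum>l\<in>UNIV. axis i 1 $ l * (\<Sum>j\<in>UNIV. christoffel g p k l j * X p $ j))"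
    by (simp add: sum_distrib_left mult_ac)
  then show ?thesis by (simp add: levi_civita_def)
qed

locale metric_chart =
  fixes U :: "(real^'m::finite) set" and g :: "real^'m \<Rightarrow> real^'m^'m"
  assumes open_U: "open U"
    and smooth_g: "smooth_mat_on U g"
    and g_symmetric: "p \<in> U \<Longrightarrow> g p $ i $ j = g p $ j $ i"
    and g_pos_def: "p \<in> U \<Longrightarrow> v \<noteq> 0 \<Longrightarrow> gform g p v v > 0"
begin

lemma differentiable_g: "p \<in> U \<Longrightarrow> (\<lambda>q. g q $ i $ j) differentiable (at p)"
  using smooth_fun_on_imp_differentiable smooth_g open_U unfolding smooth_mat_on_def by blast

lemma differentiable_partial_g: "p \<in> U \<Longrightarrow> partial l (\<lambda>q. g q $ i $ j) differentiable (at p)"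
  using smooth_fun_on_imp_differentiable smooth_fun_on_partial smooth_g open_U
  unfolding smooth_mat_on_def by blast

lemma partial_g_symmetric: "p \<in> U \<Longrightarrow> partial l (\<lambda>q. g q $ i $ j) p = partial l (\<lambda>q. g q $ j $ i) p"
  by (rule partial_cong_open[OF open_U]) (auto simp: g_symmetric)

lemma transpose_g: "p \<in> U \<Longrightarrow> transpose (g p) = g p"
  by (simp add: vec_eq_iff transpose_def g_symmetric)

lemma gform_commute:
  assumes "p \<in> U"
  shows "gform g p x y = gform g p y x"
proof -
  have "x \<bullet> (g p *v y) = (x v* g p) \<bullet> y"
    by (rule dot_lmul_matrix[symmetric])
  also have "x v* g p = g p *v x"
    by (metis transpose_matrix_vector transpose_g[OF assms])
  finally show ?thesis
    by (simp add: gform_def inner_commute)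
qed

lemma invertible_g:
  assumes "p \<in> U"
  shows "invertible (g p)"
proof -
  have "inj ((*v) (g p))"
  proof (rule injI)
    fix v w
    assume "g p *v v = g p *v w"
    then have "gform g p (v - w) (v - w) = 0"
      by (simp add: gform_def matrix_vector_mult_diff_distrib)
    then show "v = w"
      using g_pos_def[OF assms, of "v - w"] by force
  qed
  then show ?thesis
    using matrix_left_invertible_injective invertible_left_inverse by blast
qed

lemma g_mult_matrix_inv:
  assumes "p \<in> U"
  shows "(\<Sum>k\<in>UNIV. g p $ i $ k * matrix_inv (g p) $ k $ j) = (if i = j then 1 else 0)"
  using arg_cong[OF matrix_inv_mult_cancel(1)[OF invertible_g[OF assms]], of "\<lambda>A. A $ i $ j"]
  by (simp add: matrix_matrix_mult_def mat_def)

lemma trace_matrix_inv_g_mult: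
  assumes "p \<in> U"
  shows "(\<Sum>j\<in>UNIV. \<Sum>i\<in>UNIV. matrix_inv (g p) $ j $ i * (\<Sum>k\<in>UNIV. g p $ i $ k * M $ k $ j)) = trace M"
proof -
  have "trace (matrix_inv (g p) ** (g p ** M)) = trace M"
    by (simp add: matrix_mul_assoc matrix_inv_mult_cancel(2)[OF invertible_g[OF assms]])
  then show ?thesis
    by (simp add: trace_def matrix_matrix_mult_def)
qed

lemma christoffel_symmetric: "p \<in> U \<Longrightarrow> christoffel g p k i j = christoffel g p k j i"
  unfolding christoffel_def by (simp add: partial_g_symmetric[of p _ i j] add.commute)

lemma christoffel_lower:
  assumes "p \<in> U"
  shows "(\<Sum>k\<in>UNIV. g p $ l $ k * christoffel g p k i j) =
    1/2 * (partial i (\<lambda>q. g q $ j $ l) p + partial j (\<lambda>q. g q $ i $ l) p - partial l (\<lambda>q. g q $ i $ j) p)"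
proof -
  let ?X = "\<lambda>m. partial i (\<lambda>q. g q $ j $ m) p + partial j (\<lambda>q. g q $ i $ m) p - partial m (\<lambda>q. g q $ i $ j) p"
  have "(\<Sum>k\<in>UNIV. g p $ l $ k * christoffel g p k i j)
      = 1/2 * (\<Sum>m\<in>UNIV. (\<Sum>k\<in>UNIV. g p $ l $ k * matrix_inv (g p) $ k $ m) * ?X m)"
    unfolding christoffel_def sum_distrib_left sum_distrib_right
    by (subst sum.swap) (simp add: mult_ac)
  also have "\<dots> = 1/2 * ?X l"
    by (simp add: g_mult_matrix_inv[OF assms] mult_if_zero)
  finally show ?thesis .
qed

lemma partial_g_eq_christoffel:
  assumes "p \<in> U"
  shows "partial i (\<lambda>q. g q $ j $ l) p
    = (\<Sum>k\<in>UNIV. g p $ j $ k * christoffel g p k i l) + (\<Sum>k\<in>UNIV. g p $ l $ k * christoffel g p k i j)"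
  using christoffel_lower[OF assms, of j i l] christoffel_lower[OF assms, of l i j]
    partial_g_symmetric[OF assms, of i l j]
  by simp

lemma differentiable_christoffel:
  assumes "p \<in> U"
  shows "(\<lambda>q. christoffel g q k i j) differentiable (at p)"
  unfolding christoffel_def
  by (intro differentiable_mult differentiable_const differentiable_sum ballI differentiable_add
      differentiable_diff differentiable_matrix_inv[OF open_U assms] invertible_g
      differentiable_g differentiable_partial_g assms) auto

lemma partial_gform:
  assumes p: "p \<in> U"
    and X: "\<And>k. (\<lambda>q. X q $ k) differentiable (at p)"
    and Y: "\<And>k. (\<lambda>q. Y q $ k) differentiable (at p)"
  shows "partial l (\<lambda>q. gform g q (X q) (Y q)) p
       = gform g p (levi_civita g (axis l 1) X p) (Y p) + gform g p (X p) (levi_civita g (axis l 1) Y p)"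
proof -
  define C dG :: "real^'m^'m"
    where "C = (\<chi> k j. christoffel g p k l j)" and "dG = (\<chi> i j. partial l (\<lambda>q. g q $ i $ j) p)"
  define dX dY :: "real^'m"
    where "dX = (\<chi> k. partial l (\<lambda>q. X q $ k) p)" and "dY = (\<chi> k. partial l (\<lambda>q. Y q $ k) p)"
  have levi_civita: "levi_civita g (axis l 1) X p = dX + C *v X p"
      "levi_civita g (axis l 1) Y p = dY + C *v Y p"
    by (simp_all add: vec_eq_iff levi_civita_axis C_def dX_def dY_def matrix_vector_mult_def)
  have dgY: "(\<lambda>q. \<Sum>j\<in>UNIV. g q $ i $ j * Y q $ j) differentiable (at p)" for i
    using differentiable_g[OF p] Y by (auto intro!: differentiable_sum differentiable_mult)
  have "partial l (\<lambda>q. \<Sum>j\<in>UNIV. g q $ i $ j * Y q $ j) p = (dG *v Y p + g p *v dY) $ i" for i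
    using differentiable_g[OF p] Y
    by (simp add: partial_sum partial_mult sum.distrib dG_def dY_def matrix_vector_mult_def)
  then have "partial l (\<lambda>q. gform g q (X q) (Y q)) p = dX \<bullet> (g p *v Y p) + X p \<bullet> (dG *v Y p + g p *v dY)"
    using X dgY
    by (simp add: gform_def inner_vec_def matrix_vector_mult_def partial_sum partial_mult
        sum.distrib distrib_left dX_def)
  moreover have "dG = g p ** C + transpose (g p ** C)"
    by (simp add: vec_eq_iff dG_def C_def partial_g_eq_christoffel[OF p] matrix_matrix_mult_def transpose_def)
  moreover have "X p \<bullet> (transpose (g p ** C) *v Y p) = (C *v X p) \<bullet> (g p *v Y p)"
  proof -
    have "transpose (g p ** C) *v Y p = transpose C *v (g p *v Y p)"
      by (simp only: matrix_transpose_mul transpose_g[OF p] matrix_vector_mul_assoc)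
    then show ?thesis
      by (simp only: dot_lmul_matrix[symmetric] vector_transpose_matrix)
  qed
  ultimately show ?thesis
    by (simp add: levi_civita gform_def inner_add_left inner_add_right matrix_vector_mult_add_rdistrib
        matrix_vector_right_distrib matrix_vector_mul_assoc)
qed

lemma lie_g_comp_eq_levi_civita:
  assumes p: "p \<in> U"
  shows "lie_g_comp X g p i j
    = gform g p (levi_civita g (axis i 1) X p) (axis j 1) + gform g p (axis i 1) (levi_civita g (axis j 1) X p)"
proof -
  have "partial c (\<lambda>q. g q $ i $ j) p
      = (\<Sum>k\<in>UNIV. g p $ i $ k * christoffel g p k j c) + (\<Sum>k\<in>UNIV. christoffel g p k i c * g p $ k $ j)" for c
    using partial_g_eq_christoffel[OF p, of c i j]
    by (simp add: christoffel_symmetric[OF p, of _ c] g_symmetric[OF p, of j] mult.commute)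
  then have "(\<Sum>c\<in>UNIV. X p $ c * partial c (\<lambda>q. g q $ i $ j) p)
      = (\<Sum>c\<in>UNIV. \<Sum>k\<in>UNIV. g p $ i $ k * (christoffel g p k j c * X p $ c))
        + (\<Sum>c\<in>UNIV. \<Sum>k\<in>UNIV. christoffel g p k i c * X p $ c * g p $ k $ j)"
    by (simp add: distrib_left sum.distrib sum_distrib_left mult_ac)
  also have "\<dots> = (\<Sum>k\<in>UNIV. \<Sum>c\<in>UNIV. g p $ i $ k * (christoffel g p k j c * X p $ c))
        + (\<Sum>k\<in>UNIV. \<Sum>c\<in>UNIV. christoffel g p k i c * X p $ c * g p $ k $ j)"
    by (subst (1 2) sum.swap) (rule refl)
  finally show ?thesis
    by (simp add: lie_g_comp_def gform_axis_left gform_axis_right levi_civita_axis algebra_simps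
        sum.distrib sum_distrib_left sum_distrib_right)
qed

end

section \<open>Almost paracontact almost paracomplex Riemannian charts\<close>

locale apapR_chart =
  fixes U :: "(real^'m::finite) set" and \<phi> :: "real^'m \<Rightarrow> real^'m^'m"
    and \<xi> \<eta> :: "real^'m \<Rightarrow> real^'m" and g :: "real^'m \<Rightarrow> real^'m^'m"
  assumes apapR: "apapR U \<phi> \<xi> \<eta> g"

sublocale apapR_chart \<subseteq> metric_chart U g
  using apapR by unfold_locales (auto simp: apapR_def)

context apapR_chart
begin

lemma smooth_xi: "smooth_fun_on U (\<lambda>q. \<xi> q $ i)"
  using apapR by (simp add: apapR_def smooth_vec_on_def)

lemma differentiable_xi: "p \<in> U \<Longrightarrow> (\<lambda>q. \<xi> q $ i) differentiable (at p)"
  using smooth_xi open_U by (rule smooth_fun_on_imp_differentiable)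

lemma differentiable_partial_xi: "p \<in> U \<Longrightarrow> partial l (\<lambda>q. \<xi> q $ i) differentiable (at p)"
  using smooth_fun_on_partial[OF smooth_xi] open_U by (rule smooth_fun_on_imp_differentiable)

lemma differentiable_eta: "p \<in> U \<Longrightarrow> (\<lambda>q. \<eta> q $ i) differentiable (at p)"
  using smooth_fun_on_imp_differentiable apapR open_U unfolding apapR_def smooth_vec_on_def by blast

lemma phi_xi: "p \<in> U \<Longrightarrow> \<phi> p *v \<xi> p = 0"
  using apapR unfolding apapR_def by blast

lemma eta_xi: "p \<in> U \<Longrightarrow> \<eta> p \<bullet> \<xi> p = 1"
  using apapR unfolding apapR_def by blast

lemma trace_phi: "p \<in> U \<Longrightarrow> trace (\<phi> p) = 0"
  using apapR unfolding apapR_def by blast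

lemma gform_phi_phi:
  "p \<in> U \<Longrightarrow> gform g p (\<phi> p *v x) (\<phi> p *v y) = gform g p x y - (\<eta> p \<bullet> x) * (\<eta> p \<bullet> y)"
  using apapR unfolding apapR_def by blast

lemma gform_xi: "p \<in> U \<Longrightarrow> gform g p x (\<xi> p) = \<eta> p \<bullet> x"
  using gform_phi_phi[of p x "\<xi> p"] by (simp add: phi_xi eta_xi gform_def)

lemma g_xi_xi: "p \<in> U \<Longrightarrow> gform g p (\<xi> p) (\<xi> p) = 1"
  by (simp add: gform_xi eta_xi inner_commute)

lemma eta_eq_g_xi: "p \<in> U \<Longrightarrow> \<eta> p = g p *v \<xi> p"
  using gform_xi[of p "axis _ 1"] by (simp add: vec_eq_iff gform_axis_left inner_axis matrix_vector_mult_def)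

lemma matrix_inv_g_eta: "p \<in> U \<Longrightarrow> matrix_inv (g p) *v \<eta> p = \<xi> p"
  by (simp add: eta_eq_g_xi matrix_vector_mul_assoc matrix_inv_mult_cancel(2) invertible_g)

lemma assoc_metric_xi_xi: "p \<in> U \<Longrightarrow> assoc_metric \<phi> \<eta> g p (\<xi> p) (\<xi> p) = 1"
  by (simp add: assoc_metric_def phi_xi eta_xi gform_def)

text \<open>Contracting with \<open>g\<^sup>-\<^sup>1\<close> gives \<open>CARD('m) A + B tr \<phi> + B + C = 0\<close> where \<open>tr \<phi> = 0\<close>, and
  evaluating on \<open>(\<xi>, \<xi>)\<close> gives \<open>A + B + C = 0\<close>.\<close>

lemma combination_vanishes_imp_metric_coeff_0:
  assumes p: "p \<in> U" and card: "CARD('m) \<noteq> 1"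
    and zero: "\<And>x y. A * gform g p x y + B * assoc_metric \<phi> \<eta> g p x y + C * (\<eta> p \<bullet> x) * (\<eta> p \<bullet> y) = 0"
  shows "A = 0"
proof -
  define H where "H = matrix_inv (g p)"
  have "A + B + C = 0"
    using zero[of "\<xi> p" "\<xi> p"] g_xi_xi[OF p] assoc_metric_xi_xi[OF p] eta_xi[OF p] by simp
  have entries: "A * g p $ i $ j + B * (\<Sum>k\<in>UNIV. g p $ i $ k * \<phi> p $ k $ j) + (B + C) * (\<eta> p $ i * \<eta> p $ j) = 0"
    for i j
    using zero[of "axis i 1" "axis j 1"]
    by (simp add: assoc_metric_def gform_axis_left inner_axis matrix_vector_mult_def algebra_simps)
  have "0 = (\<Sum>j\<in>UNIV. \<Sum>i\<in>UNIV. H $ j $ i * (A * (\<Sum>k\<in>UNIV. g p $ i $ k * mat 1 $ k $ j)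
      + B * (\<Sum>k\<in>UNIV. g p $ i $ k * \<phi> p $ k $ j) + (B + C) * (\<eta> p $ i * \<eta> p $ j)))"
    using entries by (simp add: mat_def mult_if_zero)
  also have "\<dots> = A * (\<Sum>j\<in>UNIV. \<Sum>i\<in>UNIV. H $ j $ i * (\<Sum>k\<in>UNIV. g p $ i $ k * mat 1 $ k $ j))
      + B * (\<Sum>j\<in>UNIV. \<Sum>i\<in>UNIV. H $ j $ i * (\<Sum>k\<in>UNIV. g p $ i $ k * \<phi> p $ k $ j))
      + (B + C) * (\<Sum>j\<in>UNIV. \<Sum>i\<in>UNIV. H $ j $ i * (\<eta> p $ i * \<eta> p $ j))"
    by (simp add: distrib_left sum.distrib sum_distrib_left mult_ac)
  also have "(\<Sum>j\<in>UNIV. \<Sum>i\<in>UNIV. H $ j $ i * (\<eta> p $ i * \<eta> p $ j)) = (H *v \<eta> p) \<bullet> \<eta> p"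
    by (simp add: matrix_vector_mult_def inner_vec_def sum_distrib_left sum_distrib_right mult_ac)
  also have "\<dots> = 1"
    using matrix_inv_g_eta[OF p] eta_xi[OF p] by (simp add: H_def inner_commute)
  finally have "A * real CARD('m) + B + C = 0"
    by (simp add: H_def trace_matrix_inv_g_mult[OF p] trace_I trace_phi[OF p])
  then have "A * (real CARD('m) - 1) = 0"
    using \<open>A + B + C = 0\<close> unfolding right_diff_distrib by linarith
  then show "A = 0"
    using card by simp
qed

lemma ricci_xi_xi_einstein_like:
  assumes "para_Einstein_like U \<phi> \<eta> g a b c" and "p \<in> U"
  shows "ricci g p (\<xi> p) (\<xi> p) = a + b + c"
  using assms by (simp add: para_Einstein_like_def g_xi_xi assoc_metric_xi_xi eta_xi)

end

section \<open>Torse-forming Reeb vector fields\<close>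

locale torse_forming_reeb = apapR_chart U \<phi> \<xi> \<eta> g
  for U :: "(real^'m::finite) set" and \<phi> \<xi> \<eta> g +
  fixes f :: "real^'m \<Rightarrow> real" and \<alpha> :: "real^'m \<Rightarrow> real^'m"
  assumes levi_civita_xi: "p \<in> U \<Longrightarrow> levi_civita g x \<xi> p = f p *\<^sub>R x + (\<alpha> p \<bullet> x) *\<^sub>R \<xi> p"
begin

text \<open>Differentiate \<open>g(\<xi>, \<xi>) = 1\<close>.\<close>

lemma alpha_eq:
  assumes p: "p \<in> U"
  shows "\<alpha> p = - f p *\<^sub>R \<eta> p"
proof -
  have "partial l (\<lambda>q. gform g q (\<xi> q) (\<xi> q)) p = partial l (\<lambda>q. 1) p" for l
    using g_xi_xi by (intro partial_cong_open[OF open_U p]) simp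
  moreover have "partial l (\<lambda>q. gform g q (\<xi> q) (\<xi> q)) p = 2 * (f p * \<eta> p $ l + \<alpha> p $ l)" for l
  proof -
    have "gform g p (levi_civita g (axis l 1) \<xi> p) (\<xi> p) = f p * \<eta> p $ l + \<alpha> p $ l"
      by (simp add: levi_civita_xi[OF p] gform_add_left gform_scaleR_left gform_xi[OF p] eta_xi[OF p]
          inner_axis inner_commute)
    then show ?thesis
      using partial_gform[OF p differentiable_xi[OF p] differentiable_xi[OF p], of l]
        gform_commute[OF p, of "\<xi> p" "levi_civita g (axis l 1) \<xi> p"]
      by simp
  qed
  ultimately have "\<alpha> p $ l = - f p * \<eta> p $ l" for l
    by (metis partial_const mult_eq_0_iff add_eq_0_iff zero_neq_numeral minus_mult_left)
  then show ?thesis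
    by (simp add: vec_eq_iff)
qed

lemma levi_civita_xi_eq: "p \<in> U \<Longrightarrow> levi_civita g x \<xi> p = f p *\<^sub>R (x - (\<eta> p \<bullet> x) *\<^sub>R \<xi> p)"
  by (simp add: levi_civita_xi alpha_eq algebra_simps)

lemma partial_xi_eq:
  assumes "p \<in> U"
  shows "partial b (\<lambda>q. \<xi> q $ a) p + (\<Sum>c\<in>UNIV. christoffel g p a b c * \<xi> p $ c)
    = f p * ((if a = b then 1 else 0) - \<eta> p $ b * \<xi> p $ a)"
proof -
  have "levi_civita g (axis b 1) \<xi> p $ a = f p * ((if a = b then 1 else 0) - \<eta> p $ b * \<xi> p $ a)"
    unfolding levi_civita_xi_eq[OF assms] inner_axis by (simp add: axis_def)
  then show ?thesis
    by (simp only: levi_civita_axis)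
qed

lemma lie_g_xi:
  assumes p: "p \<in> U"
  shows "lie_g \<xi> g p x y = 2 * f p * (gform g p x y - (\<eta> p \<bullet> x) * (\<eta> p \<bullet> y))"
proof -
  have half: "gform g p (levi_civita g (axis i 1) \<xi> p) (axis j 1) = f p * (g p $ i $ j - \<eta> p $ i * \<eta> p $ j)"
    for i j
    using gform_commute[OF p, of "\<xi> p" "axis j 1"]
    by (simp add: levi_civita_xi_eq[OF p] gform_scaleR_left gform_diff_left gform_xi[OF p] gform_axis_axis
        inner_axis)
  have comp: "lie_g_comp \<xi> g p i j = 2 * f p * (g p $ i $ j - \<eta> p $ i * \<eta> p $ j)" for i j
    using half[of i j] half[of j i] gform_commute[OF p, of "axis i 1" "levi_civita g (axis j 1) \<xi> p"]
      g_symmetric[OF p, of j i]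
    by (simp add: lie_g_comp_eq_levi_civita[OF p] algebra_simps)
  have "lie_g \<xi> g p x y = (\<Sum>i\<in>UNIV. \<Sum>j\<in>UNIV. x $ i * y $ j * (2 * f p * (g p $ i $ j - \<eta> p $ i * \<eta> p $ j)))"
    by (simp add: lie_g_def comp)
  also have "\<dots> = 2 * f p * (\<Sum>i\<in>UNIV. \<Sum>j\<in>UNIV. x $ i * (g p $ i $ j * y $ j))
      - 2 * f p * (\<Sum>i\<in>UNIV. \<Sum>j\<in>UNIV. (\<eta> p $ i * x $ i) * (\<eta> p $ j * y $ j))"
    by (simp add: algebra_simps sum_subtractf sum_distrib_left)
  also have "(\<Sum>i\<in>UNIV. \<Sum>j\<in>UNIV. (\<eta> p $ i * x $ i) * (\<eta> p $ j * y $ j))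
      = (\<eta> p \<bullet> x) * (\<eta> p \<bullet> y)"
    by (simp add: inner_vec_def sum_product)
  also have "(\<Sum>i\<in>UNIV. \<Sum>j\<in>UNIV. x $ i * (g p $ i $ j * y $ j)) = gform g p x y"
    by (simp add: gform_def inner_vec_def matrix_vector_mult_def sum_distrib_left)
  finally show ?thesis
    by (simp add: algebra_simps)
qed

lemma f_eq_einstein_like_soliton:
  assumes p: "p \<in> U" and "CARD('m) \<noteq> 1"
    and "para_Einstein_like U \<phi> \<eta> g a b c"
    and "para_Ricci_like_soliton U \<phi> \<xi> \<eta> g lam mu nu"
  shows "f p = - (a + lam)"
proof -
  have "(a + f p + lam) * gform g p x y + (b + mu) * assoc_metric \<phi> \<eta> g p x y
      + (c + nu - f p) * (\<eta> p \<bullet> x) * (\<eta> p \<bullet> y) = 0" for x y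
    using assms(3,4) p
    by (simp add: para_Einstein_like_def para_Ricci_like_soliton_def lie_g_xi algebra_simps)
  then have "a + f p + lam = 0"
    by (rule combination_vanishes_imp_metric_coeff_0[OF p assms(2)])
  then show ?thesis by simp
qed

lemma ricci_xi_xi_soliton:
  assumes "para_Ricci_like_soliton U \<phi> \<xi> \<eta> g lam mu nu" and "p \<in> U"
  shows "ricci g p (\<xi> p) (\<xi> p) = - (lam + mu + nu)"
  using assms by (simp add: para_Ricci_like_soliton_def lie_g_xi g_xi_xi assoc_metric_xi_xi eta_xi)

text \<open>Differentiate \<open>\<nabla>\<xi> = F \<phi>\<^sup>2\<close> once more.\<close>

lemma second_partial_xi:
  assumes f_const: "\<And>q. q \<in> U \<Longrightarrow> f q = F" and p: "p \<in> U"
  shows "partial a (partial b (\<lambda>q. \<xi> q $ k)) p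
      + (\<Sum>c\<in>UNIV. partial a (\<lambda>q. christoffel g q k b c) p * \<xi> p $ c
                   + christoffel g p k b c * partial a (\<lambda>q. \<xi> q $ c) p)
    = - F * (partial a (\<lambda>q. \<eta> q $ b) p * \<xi> p $ k + \<eta> p $ b * partial a (\<lambda>q. \<xi> q $ k) p)"
proof -
  have "partial a (\<lambda>q. partial b (\<lambda>q. \<xi> q $ k) q + (\<Sum>c\<in>UNIV. christoffel g q k b c * \<xi> q $ c)) p
      = partial a (\<lambda>q. F * (if k = b then 1 else 0) - F * (\<eta> q $ b * \<xi> q $ k)) p"
    using partial_xi_eq f_const
    by (intro partial_cong_open[OF open_U p]) (simp add: right_diff_distrib)
  moreover have "partial a (\<lambda>q. partial b (\<lambda>q. \<xi> q $ k) q + (\<Sum>c\<in>UNIV. christoffel g q k b c * \<xi> q $ c)) p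
      = partial a (partial b (\<lambda>q. \<xi> q $ k)) p
        + (\<Sum>c\<in>UNIV. partial a (\<lambda>q. christoffel g q k b c) p * \<xi> p $ c
                     + christoffel g p k b c * partial a (\<lambda>q. \<xi> q $ c) p)"
    using differentiable_partial_xi[OF p] differentiable_christoffel[OF p] differentiable_xi[OF p]
    by (simp add: partial_add partial_sum partial_mult differentiable_mult)
  moreover have "partial a (\<lambda>q. F * (if k = b then 1 else 0) - F * (\<eta> q $ b * \<xi> q $ k)) p
      = - F * (partial a (\<lambda>q. \<eta> q $ b) p * \<xi> p $ k + \<eta> p $ b * partial a (\<lambda>q. \<xi> q $ k) p)"
    using differentiable_eta[OF p] differentiable_xi[OF p]
    by (simp add: partial_diff partial_cmult partial_mult differentiable_mult)
  ultimately show ?thesis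
    by simp
qed

lemma ricci_xi_xi:
  assumes f_const: "\<And>q. q \<in> U \<Longrightarrow> f q = F" and p: "p \<in> U"
  shows "ricci g p (\<xi> p) (\<xi> p) = - (real CARD('m) - 1) * F\<^sup>2"
proof -
  define x e where "x c = \<xi> p $ c" and "e c = \<eta> p $ c" for c
  define \<Gamma> where "\<Gamma> k i j = christoffel g p k i j" for k i j
  define d\<Gamma> where "d\<Gamma> a k i j = partial a (\<lambda>q. christoffel g q k i j) p" for a k i j
  define dx de where "dx a c = partial a (\<lambda>q. \<xi> q $ c) p" and "de a c = partial a (\<lambda>q. \<eta> q $ c) p" for a c
  define ddx where "ddx a b k = partial a (partial b (\<lambda>q. \<xi> q $ k)) p" for a b k
  define W where "W a b = F * (if a = b then 1 else 0) - F * e b * x a" for a b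
  define dW where "dW a k b = - F * (de a b * x k + e b * dx a k)" for a k b
  have dx_eq: "dx b a = W a b - (\<Sum>c\<in>UNIV. \<Gamma> a b c * x c)" for a b
    using partial_xi_eq[OF p, of b a] f_const[OF p]
    by (simp add: dx_def W_def \<Gamma>_def x_def e_def algebra_simps)
  have ddx_eq: "ddx a b k + (\<Sum>c\<in>UNIV. d\<Gamma> a k b c * x c + \<Gamma> k b c * dx a c) = dW a k b" for a b k
    using second_partial_xi[OF f_const p, of a b k]
    by (simp add: ddx_def d\<Gamma>_def x_def \<Gamma>_def dx_def dW_def de_def e_def)
  have ddx_sym: "ddx a b k = ddx b a k" for a b k
    unfolding ddx_def by (rule partial_commute[OF smooth_xi open_U p])
  have \<Gamma>_sym: "\<Gamma> k i j = \<Gamma> k j i" for k i j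
    unfolding \<Gamma>_def by (rule christoffel_symmetric[OF p])
  have d\<Gamma>_sym: "d\<Gamma> a k i j = d\<Gamma> a k j i" for a k i j
    unfolding d\<Gamma>_def by (rule partial_cong_open[OF open_U p]) (rule christoffel_symmetric)
  have ex: "(\<Sum>i\<in>UNIV. e i * x i) = 1"
    using eta_xi[OF p] by (simp add: e_def x_def inner_vec_def)
  have "ricci g p (\<xi> p) (\<xi> p) = (\<Sum>b\<in>UNIV. x b * (\<Sum>c\<in>UNIV. x c * ricci_comp g p c b))"
    unfolding ricci_def x_def by (subst sum.swap) (simp add: sum_distrib_left mult_ac)
  also have "\<dots> = (\<Sum>b\<in>UNIV. x b * ((\<Sum>k\<in>UNIV. dW k k b - dW b k k)
      + (\<Sum>k\<in>UNIV. \<Sum>l\<in>UNIV. \<Gamma> k k l * W l b - \<Gamma> k b l * W l k)))"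
    using contracted_ricci_identity[OF dx_eq ddx_eq ddx_sym \<Gamma>_sym d\<Gamma>_sym]
    by (simp add: ricci_comp_def d\<Gamma>_def \<Gamma>_def)
  also have "\<dots> = - (real CARD('m) - 1) * F\<^sup>2"
    using contracted_ricci_identity_concircular[where x = x and e = e and \<Gamma> = \<Gamma> and dx = dx and de = de and F = F]
      dx_eq \<Gamma>_sym ex
    by (simp add: W_def dW_def)
  finally show ?thesis .
qed

end

theorem mainTheorem10:
  fixes U :: "(real^'m::finite) set"
    and \<phi> g :: "real^'m \<Rightarrow> real^'m^'m"
    and \<xi> \<eta> :: "real^'m \<Rightarrow> real^'m"
    and f :: "real^'m \<Rightarrow> real"
    and n :: nat
    and a b c lam mu nu :: real
  assumes "n \<ge> 1"
    and "CARD('m) = 2 * n + 1"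
    and "apapR U \<phi> \<xi> \<eta> g"
    and "torse_forming U g \<xi> f"
    and "para_Einstein_like U \<phi> \<eta> g a b c"
    and "para_Ricci_like_soliton U \<phi> \<xi> \<eta> g lam mu nu"
  shows "(\<exists>C. \<forall>p\<in>U. f p = C) \<and>
         (\<exists>\<epsilon>\<in>{1, -1::real}. \<forall>p\<in>U.
            f p = \<epsilon> * sqrt (- (a + b + c) / (2 * real n)) \<and>
            f p = \<epsilon> * sqrt ((lam + mu + nu) / (2 * real n)))"
proof -
  obtain \<alpha> where "\<forall>p\<in>U. \<forall>x. levi_civita g x \<xi> p = f p *\<^sub>R x + (\<alpha> p \<bullet> x) *\<^sub>R \<xi> p"
    using assms(4) unfolding torse_forming_def by blast
  then interpret torse_forming_reeb U \<phi> \<xi> \<eta> g f \<alpha>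
    using assms(3) by unfold_locales auto
  define F where "F = - (a + lam)"
  have f_const: "f p = F" if "p \<in> U" for p
    unfolding F_def using f_eq_einstein_like_soliton[OF that _ assms(5,6)] assms(1,2) by simp
  have F_sq: "- (a + b + c) / (2 * real n) = F\<^sup>2" "(lam + mu + nu) / (2 * real n) = F\<^sup>2" if "p \<in> U" for p
    using ricci_xi_xi[OF f_const that] ricci_xi_xi_einstein_like[OF assms(5) that]
      ricci_xi_xi_soliton[OF assms(6) that] assms(1,2)
    by (simp_all add: field_simps)
  define \<epsilon> where "\<epsilon> = (if F \<ge> 0 then 1 else - 1 :: real)"
  have "F = \<epsilon> * sqrt (F\<^sup>2)"
    by (simp add: \<epsilon>_def)
  then have "\<forall>p\<in>U. f p = \<epsilon> * sqrt (- (a + b + c) / (2 * real n)) \<and> f p = \<epsilon> * sqrt ((lam + mu + nu) / (2 * real n))"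
    using f_const F_sq by simp
  moreover have "\<epsilon> \<in> {1, -1}"
    by (simp add: \<epsilon>_def)
  ultimately show ?thesis
    using f_const by blast
qed

end
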